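(* Let $G$ be an arbitrary group and $E$ a real Banach space. Then $KJ(G;E)=PJ(G;E)\oplus B(G;E)$ (direct sum of linear subspaces).
   Context: $KJ(G;E)$ is the real vector space of functions $f\colon G\to E$ for which there exists $c>0$ with $\|f(xy)+f(xy^{-1})-2f(x)\|\le c$ for all $x,y\in G$ (quasi-Jensen functions). $PJ(G;E)$ is the subspace of $f\in KJ(G;E)$ with $f(x^n)=nf(x)$ for all $x\in G$, $n\in\mathbb{Z}$ (pseudo-Jensen functions). $B(G;E)$ is the space of bounded functions $G\to E$. *)

theory Defs
  imports "HOL-Analysis.Analysis" "HOL-Algebra.Group"
begin

text \<open>Functions are normalised to be 0 outside the carrier, so that they correspond exactly
  to functions carrier G \<rightarrow> E.\<close>

definition on_carrier :: "('g, 'm) monoid_scheme \<Rightarrow> ('g \<Rightarrow> 'e::real_normed_vector) \<Rightarrow> bool" where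
  "on_carrier G f \<longleftrightarrow> (\<forall>x. x \<notin> carrier G \<longrightarrow> f x = 0)"

definition KJ :: "('g, 'm) monoid_scheme \<Rightarrow> ('g \<Rightarrow> 'e::real_normed_vector) set" where
  "KJ G = {f. on_carrier G f \<and>
     (\<exists>c>0. \<forall>x\<in>carrier G. \<forall>y\<in>carrier G.
        norm (f (x \<otimes>\<^bsub>G\<^esub> y) + f (x \<otimes>\<^bsub>G\<^esub> inv\<^bsub>G\<^esub> y) - 2 *\<^sub>R f x) \<le> c)}"

definition PJ :: "('g, 'm) monoid_scheme \<Rightarrow> ('g \<Rightarrow> 'e::real_normed_vector) set" where
  "PJ G = {f. f \<in> KJ G \<and>
     (\<forall>x\<in>carrier G. \<forall>n::int. f (x [^]\<^bsub>G\<^esub> n) = of_int n *\<^sub>R f x)}"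

definition BF :: "('g, 'm) monoid_scheme \<Rightarrow> ('g \<Rightarrow> 'e::real_normed_vector) set" where
  "BF G = {f. on_carrier G f \<and> (\<exists>c. \<forall>x\<in>carrier G. norm (f x) \<le> c)}"

end

theory Submission
  imports Defs
begin

text \<open>For a quasi-Jensen \<open>f\<close> and \<open>x \<in> G\<close>, three Jensen defects combine to show that
  \<open>k \<mapsto> f (x\<^sup>k) - f 1\<close> is quasi-additive on \<open>\<int>\<close>.  By Hyers' doubling argument it lies within
  bounded distance of a unique linear map \<open>k \<mapsto> k p(x)\<close>.  Comparing these maps for \<open>x\<close> and \<open>x\<^sup>j\<close>
  gives \<open>p(x\<^sup>j) = j p(x)\<close>, and \<open>f - p\<close> is bounded.  The sum is direct because a bounded
  \<open>p\<close> with \<open>p(x\<^sup>n) = n p(x)\<close> must vanish.\<close>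

lemma norm_add_diff_le: "norm (a + b - c) \<le> norm a + norm b + norm (c::'a::real_normed_vector)"
  by (metis add_mono norm_triangle_ineq norm_triangle_ineq4 order_trans order_refl)

lemma bounded_multiples_eq_0:
  fixes w :: "'a::real_normed_vector"
  assumes "\<And>n::nat. norm (real n *\<^sub>R w) \<le> M"
  shows "w = 0"
proof (rule ccontr)
  assume "w \<noteq> 0"
  then obtain n :: nat where "M < real n * norm w"
    using ex_less_of_nat_mult[of "norm w" M] by auto
  with assms[of n] show False by simp
qed

lemma quasi_additive_doubling_limit:
  fixes h :: "int \<Rightarrow> 'e::banach"
  assumes D: "\<And>m n. norm (h (m + n) - h m - h n) \<le> D"
  shows "\<exists>L. (\<lambda>n. (1/2^n) *\<^sub>R h (2^n * k)) \<longlonglongrightarrow> L \<and> norm (L - h k) \<le> D"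
proof -
  define s where "s n = (1/2^n) *\<^sub>R h (2^n * k)" for n :: nat
  define d where "d n = s (Suc n) - s n" for n
  have d_bound: "norm (d n) \<le> (D/2) * (1/2)^n" for n
  proof -
    have "d n = (1/2^(Suc n)) *\<^sub>R (h (2^n*k + 2^n*k) - h (2^n*k) - h (2^n*k))"
      unfolding d_def s_def by (simp add: algebra_simps) (simp flip: scaleR_add_left)
    hence "norm (d n) = (1/2^(Suc n)) * norm (h (2^n*k + 2^n*k) - h (2^n*k) - h (2^n*k))"
      by simp
    also have "\<dots> \<le> (1/2^(Suc n)) * D"
      using D[of "2^n*k" "2^n*k"] by (intro mult_left_mono) auto
    also have "\<dots> = (D/2) * (1/2)^n" by (simp add: power_divide)
    finally show ?thesis .
  qed
  have geometric: "summable (\<lambda>n. (D/2) * (1/2::real)^n)"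
    by (intro summable_mult summable_geometric) simp
  have norm_d_summable: "summable (\<lambda>n. norm (d n))"
    by (rule summable_comparison_test[OF _ geometric]) (use d_bound in auto)
  hence "(\<lambda>n. \<Sum>i<n. d i) \<longlonglongrightarrow> suminf d"
    using summable_LIMSEQ summable_norm_cancel by blast
  moreover have "(\<Sum>i<n. d i) = s n - s 0" for n
    unfolding d_def by (rule sum_lessThan_telescope)
  ultimately have "(\<lambda>n. (s n - s 0) + s 0) \<longlonglongrightarrow> suminf d + s 0"
    by (intro tendsto_add) auto
  hence "s \<longlonglongrightarrow> suminf d + s 0" by simp
  moreover have "norm (suminf d) \<le> D"
  proof -
    have "norm (suminf d) \<le> (\<Sum>n. norm (d n))" using summable_norm norm_d_summable by blast
    also have "\<dots> \<le> (\<Sum>n. (D/2) * (1/2::real)^n)"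
      using d_bound norm_d_summable geometric by (intro suminf_le) auto
    also have "\<dots> = D"
      using suminf_mult[OF summable_geometric[of "1/2::real"], of "D/2"]
        suminf_geometric[of "1/2::real"] by simp
    finally show ?thesis .
  qed
  moreover have "s 0 = h k" by (simp add: s_def)
  ultimately show ?thesis unfolding s_def[abs_def] by auto
qed

lemma additive_int_eq_scaleR:
  fixes A :: "int \<Rightarrow> 'a::real_vector"
  assumes add: "\<And>k l. A (k + l) = A k + A l"
  shows "A k = of_int k *\<^sub>R A 1"
proof (induct k rule: int_induct[where k=0])
  case base
  show ?case using add[of 0 0] by simp
next
  case (step1 i)
  thus ?case using add[of i 1] by (simp add: algebra_simps)
next
  case (step2 i)
  thus ?case using add[of "i - 1" 1] by (simp add: algebra_simps)
qed

lemma quasi_additive_int_near_linear: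
  fixes h :: "int \<Rightarrow> 'e::banach"
  assumes D: "\<And>m n. norm (h (m + n) - h m - h n) \<le> D"
  shows "\<exists>v. \<forall>k. norm (h k - of_int k *\<^sub>R v) \<le> D"
proof -
  define A where "A k = lim (\<lambda>n. (1/2^n) *\<^sub>R h (2^n * k))" for k
  have A: "(\<lambda>n. (1/2^n) *\<^sub>R h (2^n * k)) \<longlonglongrightarrow> A k \<and> norm (A k - h k) \<le> D" for k
  proof -
    obtain L where L: "(\<lambda>n. (1/2^n) *\<^sub>R h (2^n * k)) \<longlonglongrightarrow> L" "norm (L - h k) \<le> D"
      using quasi_additive_doubling_limit[OF D] by blast
    moreover from L(1) have "A k = L" unfolding A_def by (rule limI)
    ultimately show ?thesis by simp
  qed
  have "A (k + l) = A k + A l" for k l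
  proof -
    let ?e = "\<lambda>n. (1/2^n) *\<^sub>R h (2^n*(k+l)) - (1/2^n) *\<^sub>R h (2^n*k) - (1/2^n) *\<^sub>R h (2^n*l)"
    have "?e \<longlonglongrightarrow> A (k + l) - A k - A l" using A by (intro tendsto_diff) auto
    moreover have "?e \<longlonglongrightarrow> 0"
    proof (rule Lim_null_comparison)
      have "norm (?e n) \<le> D * (1/2)^n" for n
      proof -
        have "?e n = (1/2^n) *\<^sub>R (h (2^n*k + 2^n*l) - h (2^n*k) - h (2^n*l))"
          by (simp add: scaleR_diff_right distrib_left)
        hence "norm (?e n) = (1/2^n) * norm (h (2^n*k + 2^n*l) - h (2^n*k) - h (2^n*l))"
          by simp
        also have "\<dots> \<le> (1/2^n) * D" using D by (intro mult_left_mono) auto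
        finally show ?thesis by (simp add: power_divide mult.commute)
      qed
      thus "\<forall>\<^sub>F n in sequentially. norm (?e n) \<le> D * (1/2)^n" by simp
      show "(\<lambda>n. D * (1/2::real)^n) \<longlonglongrightarrow> 0"
        by (intro tendsto_mult_right_zero LIMSEQ_realpow_zero) auto
    qed
    ultimately have "A (k + l) - A k - A l = 0" using LIMSEQ_unique by blast
    thus ?thesis by (simp add: algebra_simps)
  qed
  hence "A k = of_int k *\<^sub>R A 1" for k by (rule additive_int_eq_scaleR)
  thus ?thesis using A by (metis norm_minus_commute)
qed

lemma KJ_add:
  assumes "f \<in> KJ G" and "g \<in> KJ G"
  shows "(\<lambda>x. f x + g x) \<in> KJ G"
proof -
  let ?defect = "\<lambda>f x y. f (x \<otimes>\<^bsub>G\<^esub> y) + f (x \<otimes>\<^bsub>G\<^esub> inv\<^bsub>G\<^esub> y) - 2 *\<^sub>R f x"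
  obtain c where c: "c > 0" "\<forall>x\<in>carrier G. \<forall>y\<in>carrier G. norm (?defect f x y) \<le> c"
    using assms(1) unfolding KJ_def by blast
  obtain c' where c': "c' > 0" "\<forall>x\<in>carrier G. \<forall>y\<in>carrier G. norm (?defect g x y) \<le> c'"
    using assms(2) unfolding KJ_def by blast
  have "norm (?defect (\<lambda>x. f x + g x) x y) \<le> c + c'"
    if "x \<in> carrier G" "y \<in> carrier G" for x y
  proof -
    have "?defect (\<lambda>x. f x + g x) x y = ?defect f x y + ?defect g x y"
      by (simp add: algebra_simps)
    hence "norm (?defect (\<lambda>x. f x + g x) x y) \<le> norm (?defect f x y) + norm (?defect g x y)"
      by (simp only: norm_triangle_ineq)
    moreover have "norm (?defect f x y) \<le> c" "norm (?defect g x y) \<le> c'"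
      using c(2) c'(2) that by auto
    ultimately show ?thesis by linarith
  qed
  moreover have "on_carrier G (\<lambda>x. f x + g x)"
    using assms unfolding KJ_def on_carrier_def by simp
  ultimately show ?thesis unfolding KJ_def using c c'
    by (intro CollectI conjI exI[of _ "c + c'"]) auto
qed

lemma BF_subset_KJ:
  fixes G (structure)
  assumes "group G"
  shows "BF G \<subseteq> KJ G"
proof
  interpret group G by (rule assms)
  fix b assume b: "b \<in> BF G"
  then obtain M where M: "\<forall>x\<in>carrier G. norm (b x) \<le> M" unfolding BF_def by blast
  have "norm (b (x \<otimes> y) + b (x \<otimes> inv y) - 2 *\<^sub>R b x) \<le> 4 * M + 1"
    if "x \<in> carrier G" "y \<in> carrier G" for x y
  proof -
    have "norm (b (x \<otimes> y)) \<le> M" "norm (b (x \<otimes> inv y)) \<le> M" "norm (b x) \<le> M"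
      using M that by auto
    thus ?thesis
      using norm_add_diff_le[of "b (x \<otimes> y)" "b (x \<otimes> inv y)" "2 *\<^sub>R b x"] by simp
  qed
  moreover have "norm (b \<one>) \<le> M" using M by simp
  hence "4 * M + 1 > 0" using norm_ge_zero[of "b \<one>"] by linarith
  moreover have "on_carrier G b" using b unfolding BF_def by blast
  ultimately show "b \<in> KJ G" unfolding KJ_def by (intro CollectI conjI exI[of _ "4 * M + 1"]) auto
qed

lemma BF_uminus: "b \<in> BF G \<Longrightarrow> (\<lambda>x. - b x) \<in> BF G"
  unfolding BF_def on_carrier_def by simp

lemma PJ_BF_eq_0:
  fixes G (structure)
  assumes "group G" and p: "p \<in> PJ G" "p \<in> BF G"
  shows "p = (\<lambda>x. 0)"
proof
  interpret group G by (rule assms)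
  fix x
  show "p x = 0"
  proof (cases "x \<in> carrier G")
    case False
    thus ?thesis using p unfolding PJ_def KJ_def on_carrier_def by blast
  next
    case True
    obtain M where M: "\<forall>x\<in>carrier G. norm (p x) \<le> M" using p unfolding BF_def by blast
    have hom: "\<forall>x\<in>carrier G. \<forall>k::int. p (x [^] k) = of_int k *\<^sub>R p x"
      using p unfolding PJ_def by blast
    have "norm (real n *\<^sub>R p x) \<le> M" for n
      using M hom True int_pow_closed[OF True, of "int n"] by (metis of_int_of_nat_eq)
    thus ?thesis by (rule bounded_multiples_eq_0)
  qed
qed

lemma KJ_powers_quasi_additive:
  fixes G (structure) and m n :: int
  assumes "group G" and x: "x \<in> carrier G"
    and c: "\<And>x y. x \<in> carrier G \<Longrightarrow> y \<in> carrier G \<Longrightarrow>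
              norm (f (x \<otimes> y) + f (x \<otimes> inv y) - 2 *\<^sub>R f x) \<le> c"
  shows "norm ((f (x [^] (m + n)) - f \<one>) - (f (x [^] m) - f \<one>) - (f (x [^] n) - f \<one>)) \<le> 3/2 * c"
proof -
  interpret group G by (rule assms)
  define J where "J i j = f (x [^] (i + j)) + f (x [^] (i - j)) - 2 *\<^sub>R f (x [^] i)" for i j :: int
  have J_bound: "norm (J i j) \<le> c" for i j
    using c[of "x [^] i" "x [^] j"] x unfolding J_def by (simp add: int_pow_mult int_pow_diff)
  have "2 *\<^sub>R ((f (x [^] (m + n)) - f \<one>) - (f (x [^] m) - f \<one>) - (f (x [^] n) - f \<one>))
        = J m n + J n m - J 0 (m - n)"
    unfolding J_def by (simp add: algebra_simps scaleR_2)
  hence "2 * norm ((f (x [^] (m + n)) - f \<one>) - (f (x [^] m) - f \<one>) - (f (x [^] n) - f \<one>))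
        \<le> norm (J m n) + norm (J n m) + norm (J 0 (m - n))"
    by (metis norm_add_diff_le norm_scaleR abs_numeral)
  thus ?thesis using J_bound[of m n] J_bound[of n m] J_bound[of 0 "m - n"] by simp
qed

lemma power_homogeneous_if_near_linear:
  fixes G (structure)
  assumes "group G" and x: "x \<in> carrier G"
    and near: "\<And>x k. x \<in> carrier G \<Longrightarrow> norm (g (x [^] (k::int)) - of_int k *\<^sub>R p x) \<le> D"
  shows "p (x [^] j) = of_int j *\<^sub>R p x"
proof -
  interpret group G by (rule assms)
  have "norm (real n *\<^sub>R (p (x [^] j) - of_int j *\<^sub>R p x)) \<le> D + D" for n
  proof -
    let ?a = "g (x [^] (j * int n)) - of_int (j * int n) *\<^sub>R p x"
    let ?b = "g ((x [^] j) [^] int n) - of_int (int n) *\<^sub>R p (x [^] j)"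
    have "g ((x [^] j) [^] int n) = g (x [^] (j * int n))" using int_pow_pow[OF x] by simp
    hence "real n *\<^sub>R (p (x [^] j) - of_int j *\<^sub>R p x) = ?a - ?b"
      by (simp add: algebra_simps)
    moreover have "norm ?a \<le> D" by (rule near[OF x])
    moreover have "norm ?b \<le> D" by (rule near) (use x in simp)
    ultimately show ?thesis using norm_triangle_le_diff[of ?a ?b "D + D"] by simp
  qed
  thus ?thesis using bounded_multiples_eq_0 by fastforce
qed

lemma KJ_decompose:
  fixes G (structure) and f :: "'g \<Rightarrow> 'e::banach"
  assumes G: "group G" and f: "f \<in> KJ G"
  shows "\<exists>p b. p \<in> PJ G \<and> b \<in> BF G \<and> f = (\<lambda>x. p x + b x)"
proof -
  interpret group G by (rule G)
  obtain c where c: "\<And>x y. x \<in> carrier G \<Longrightarrow> y \<in> carrier G \<Longrightarrow>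
        norm (f (x \<otimes> y) + f (x \<otimes> inv y) - 2 *\<^sub>R f x) \<le> c"
    using f unfolding KJ_def by blast
  let ?near = "\<lambda>x v. \<forall>k::int. norm ((f (x [^] k) - f \<one>) - of_int k *\<^sub>R v) \<le> 3/2 * c"
  define p where "p x = (if x \<in> carrier G then SOME v. ?near x v else 0)" for x
  have p_near: "?near x (p x)" if x: "x \<in> carrier G" for x
  proof -
    have "\<exists>v. ?near x v"
      by (rule quasi_additive_int_near_linear) (rule KJ_powers_quasi_additive[OF G x c])
    hence "?near x (SOME v. ?near x v)" by (rule someI_ex)
    thus ?thesis unfolding p_def if_P[OF x] .
  qed
  define b where "b x = f x - p x" for x
  have "norm (b x) \<le> 3/2 * c + norm (f \<one>)" if x: "x \<in> carrier G" for x
  proof -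
    let ?d = "(f (x [^] (1::int)) - f \<one>) - of_int 1 *\<^sub>R p x"
    have "b x = ?d + f \<one>" unfolding b_def using x by simp
    hence "norm (b x) \<le> norm ?d + norm (f \<one>)" by (simp only: norm_triangle_ineq)
    moreover have "norm ?d \<le> 3/2 * c" using p_near[OF x] by blast
    ultimately show ?thesis by linarith
  qed
  moreover have "on_carrier G b"
    using f unfolding KJ_def on_carrier_def b_def p_def by simp
  ultimately have b_BF: "b \<in> BF G" unfolding BF_def by blast
  have "(\<lambda>x. f x + - b x) \<in> KJ G"
    using KJ_add[OF f] BF_subset_KJ[OF G] BF_uminus[OF b_BF] by blast
  moreover have "(\<lambda>x. f x + - b x) = p" unfolding b_def by auto
  moreover have "p (x [^] k) = of_int k *\<^sub>R p x" if "x \<in> carrier G" for x and k :: int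
    by (rule power_homogeneous_if_near_linear[OF G that, where g = "\<lambda>y. f y - f \<one>"])
      (use p_near in blast)
  ultimately have "p \<in> PJ G" unfolding PJ_def by auto
  moreover have "f = (\<lambda>x. p x + b x)" unfolding b_def by simp
  ultimately show ?thesis using b_BF by blast
qed

theorem theorem2p10:
  fixes G :: "('g, 'm) monoid_scheme"
  assumes "group G"
  shows "(KJ G :: ('g \<Rightarrow> 'e::banach) set) = {(\<lambda>x. p x + b x) | p b. p \<in> PJ G \<and> b \<in> BF G}
         \<and> PJ G \<inter> BF G = {(\<lambda>x. 0) :: 'g \<Rightarrow> 'e}"
proof (intro conjI)
  show "(KJ G :: ('g \<Rightarrow> 'e::banach) set) = {(\<lambda>x. p x + b x) | p b. p \<in> PJ G \<and> b \<in> BF G}"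
  proof (intro equalityI subsetI)
    fix f :: "'g \<Rightarrow> 'e" assume "f \<in> KJ G"
    thus "f \<in> {(\<lambda>x. p x + b x) | p b. p \<in> PJ G \<and> b \<in> BF G}"
      using KJ_decompose[OF assms] by blast
  next
    fix f :: "'g \<Rightarrow> 'e" assume "f \<in> {(\<lambda>x. p x + b x) | p b. p \<in> PJ G \<and> b \<in> BF G}"
    then obtain p b where "p \<in> PJ G" "b \<in> BF G" "f = (\<lambda>x. p x + b x)" by blast
    thus "f \<in> KJ G" using KJ_add BF_subset_KJ[OF assms] unfolding PJ_def by blast
  qed
  have "(\<lambda>x. 0) \<in> BF G" unfolding BF_def on_carrier_def by auto
  moreover have "(\<lambda>x. 0) \<in> PJ G"
    unfolding PJ_def KJ_def on_carrier_def by (auto intro: exI[of _ 1])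
  ultimately show "PJ G \<inter> BF G = {(\<lambda>x. 0) :: 'g \<Rightarrow> 'e}"
    using PJ_BF_eq_0[OF assms] by blast
qed

end
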